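(* Fix $\upsilon\in(0,1]$ and let $\rho(\upsilon)=\lim_{p\to\infty,\ p\text{ prime}}\rho(\upsilon,p)$ (this limit exists). For each $N\ge 2$ let $\rho_2(\upsilon,N)=\min\{\Lambda_3(S): S\subseteq\mathbb{Z}_N,\ |S|\ge \upsilon N\}$. Then $\lim_{p\to\infty,\ p\text{ prime}}\rho_2(\upsilon,p)=\rho(\upsilon)$.
   Context: For an integer $N\ge 2$ and $f:\mathbb{Z}_N\to\mathbb{C}$, define $\mathbb{E}(f)=\frac1N\sum_{n\in\mathbb{Z}_N} f(n)$ and $\Lambda_3(f)=\frac{1}{N^2}\sum_{n,d\in\mathbb{Z}_N} f(n)f(n+d)f(n+2d)$. A set $S\subseteq\mathbb{Z}_N$ is identified with its indicator function, so $\Lambda_3(S)$ is $N^{-2}$ times the number of pairs $(n,d)\in\mathbb{Z}_N^2$ with $n,n+d,n+2d\in S$. For $\upsilon\in(0,1]$, $\rho(\upsilon,N)=\min\{\Lambda_3(f): f:\mathbb{Z}_N\to[0,1],\ \mathbb{E}(f)\ge\upsilon\}$. *)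

theory Defs
  imports "HOL-Analysis.Analysis" "HOL-Computational_Algebra.Primes"
begin

text \<open>Z_N is represented by {0..<N}, with arithmetic mod N. Functions are
  nat \<Rightarrow> real; only their values on {0..<N} matter.\<close>

definition EE :: "nat \<Rightarrow> (nat \<Rightarrow> real) \<Rightarrow> real" where
  "EE N f = (1 / real N) * (\<Sum>n<N. f n)"

definition Lambda3 :: "nat \<Rightarrow> (nat \<Rightarrow> real) \<Rightarrow> real" where
  "Lambda3 N f = (1 / (real N)^2) *
     (\<Sum>n<N. \<Sum>d<N. f n * f ((n + d) mod N) * f ((n + 2 * d) mod N))"

text \<open>rho(v,N): minimum of Lambda3 over f : Z_N \<rightarrow> [0,1] with E f \<ge> v
  (the minimum is attained by compactness, so it equals the infimum).\<close>
definition rho :: "real \<Rightarrow> nat \<Rightarrow> real" where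
  "rho v N = Inf {Lambda3 N f | f. (\<forall>n<N. 0 \<le> f n \<and> f n \<le> 1) \<and> EE N f \<ge> v}"

definition rho2 :: "real \<Rightarrow> nat \<Rightarrow> real" where
  "rho2 v N = Min {Lambda3 N (indicator S) | S. S \<subseteq> {..<N} \<and> real (card S) \<ge> v * real N}"

end

(* Indicator functions are admissible for rho, so rho(v,N) <= rho_2(v,N). Conversely,
   for odd N write N^2 Lambda3(f) = sum_n f(n)^3 + F(f), where F counts the progressions
   with d <> 0. Their three points are distinct, so F is multilinear with nonnegative
   coefficients and hence concave along every direction e_i - e_j. Pipage rounding,
   which moves mass between two fractional values until one of them reaches 0 or 1,
   therefore keeps sum_n f(n), does not increase F, and ends with at most one fractional
   value. Rounding that value up costs at most 3N progressions, and the diagonal term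
   changes by at most N, so rho_2(v,N) <= rho(v,N) + 4/N. *)
theory Submission
  imports Defs
begin

lemma chord_le_concave_quadratic:
  fixes a b c t1 t2 :: real
  assumes "c \<le> 0" "t1 \<le> 0" "0 \<le> t2"
  shows "t2 * (a + b * t1 + c * t1\<^sup>2) - t1 * (a + b * t2 + c * t2\<^sup>2) \<le> (t2 - t1) * a"
proof -
  have "0 \<le> t1 * t2 * (t1 - t2)"
    using assms(2,3) by (intro mult_nonpos_nonpos mult_nonpos_nonneg) auto
  with assms(1) have "c * (t1 * t2 * (t1 - t2)) \<le> 0"
    by (rule mult_nonpos_nonneg)
  then show ?thesis
    by (simp add: power2_eq_square algebra_simps)
qed

lemma triple_product_chord:
  fixes x y z a b c t1 t2 :: real
  assumes "0 \<le> x" "0 \<le> y" "0 \<le> z"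
    and "a * b * c = 0" "a * b \<le> 0" "a * c \<le> 0" "b * c \<le> 0"
    and "t1 \<le> 0" "0 \<le> t2"
  shows "t2 * ((x + t1 * a) * (y + t1 * b) * (z + t1 * c))
       - t1 * ((x + t2 * a) * (y + t2 * b) * (z + t2 * c)) \<le> (t2 - t1) * (x * y * z)"
proof -
  have expand: "(x + t * a) * (y + t * b) * (z + t * c)
      = x * y * z + (a * y * z + b * x * z + c * x * y) * t + (x * (b * c) + y * (a * c) + z * (a * b)) * t\<^sup>2"
    for t
  proof -
    have "(x + t * a) * (y + t * b) * (z + t * c)
      = x * y * z + (a * y * z + b * x * z + c * x * y) * t
        + (x * (b * c) + y * (a * c) + z * (a * b)) * t\<^sup>2 + (a * b * c) * t ^ 3"
      by (simp add: power2_eq_square power3_eq_cube algebra_simps)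
    then show ?thesis
      using assms(4) by simp
  qed
  have "x * (b * c) + y * (a * c) + z * (a * b) \<le> 0"
    using assms(1-3,5-7) by (simp add: add_nonpos_nonpos mult_nonneg_nonpos)
  then show ?thesis
    unfolding expand by (rule chord_le_concave_quadratic[OF _ assms(8,9)])
qed

definition mass_transfer :: "nat \<Rightarrow> nat \<Rightarrow> nat \<Rightarrow> real" where
  "mass_transfer i j k = (if k = i then 1 else 0) - (if k = j then 1 else 0)"

lemma mass_transfer_products:
  assumes "i \<noteq> j" "a \<noteq> b" "a \<noteq> c" "b \<noteq> c"
  defines "\<delta> \<equiv> mass_transfer i j"
  shows "\<delta> a * \<delta> b * \<delta> c = 0" "\<delta> a * \<delta> b \<le> 0" "\<delta> a * \<delta> c \<le> 0" "\<delta> b * \<delta> c \<le> 0"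
  using assms by (auto simp: mass_transfer_def)

lemma sum_mass_transfer:
  assumes "i < N" "j < N"
  shows "(\<Sum>k<N. mass_transfer i j k) = 0"
  using assms by (simp add: mass_transfer_def sum_subtractf)

lemma eq_if_add_mod_eq:
  fixes x y c N :: nat
  assumes "x < N" "y < N" "(x + c) mod N = (y + c) mod N"
  shows "x = y"
proof -
  have "x = y" if "x \<le> y" "y < N" "(x + c) mod N = (y + c) mod N" for x y
  proof -
    have "N dvd y - x"
      using that mod_eq_dvd_iff_nat[of "x + c" "y + c" N] by simp
    then show "x = y"
      using that by (metis le_neq_implies_less less_imp_diff_less nat_dvd_not_less zero_less_diff)
  qed
  then show ?thesis
    using assms by (metis nat_le_linear)
qed

lemma sum_shift_mod:
  fixes g :: "nat \<Rightarrow> 'a::comm_monoid_add"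
  shows "(\<Sum>n<N. g ((n + c) mod N)) = (\<Sum>n<N. g n)"
proof -
  have inj: "inj_on (\<lambda>n. (n + c) mod N) {..<N}"
    by (auto intro: inj_onI eq_if_add_mod_eq)
  then have "(\<lambda>n. (n + c) mod N) ` {..<N} = {..<N}"
    by (intro endo_inj_surj) auto
  then show ?thesis
    using sum.reindex[OF inj, of g] by simp
qed

lemma progression_points_distinct:
  fixes N n d :: nat
  assumes "odd N" "n < N" "0 < d" "d < N"
  shows "n \<noteq> (n + d) mod N" "n \<noteq> (n + 2 * d) mod N" "(n + d) mod N \<noteq> (n + 2 * d) mod N"
proof -
  have "\<not> N dvd d"
    using assms(3,4) by (auto dest: dvd_imp_le)
  moreover have "\<not> N dvd 2 * d"
    using \<open>\<not> N dvd d\<close> assms(1) by (simp add: coprime_dvd_mult_right_iff)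
  moreover have "N dvd e" if "(n + e') mod N = (n + e' + e) mod N" for e e'
    using that mod_eq_dvd_iff_nat[of "n + e'" "n + e' + e" N] by simp
  ultimately show "n \<noteq> (n + d) mod N" "n \<noteq> (n + 2 * d) mod N" "(n + d) mod N \<noteq> (n + 2 * d) mod N"
    using assms(2) by (metis add_0_right mod_less mult_2 add.assoc)+
qed

definition nontrivial_ap_sum :: "nat \<Rightarrow> (nat \<Rightarrow> real) \<Rightarrow> real" where
  "nontrivial_ap_sum N f = (\<Sum>n<N. \<Sum>d\<in>{1..<N}. f n * f ((n + d) mod N) * f ((n + 2 * d) mod N))"

lemma nontrivial_ap_sum_chord:
  assumes "odd N" "i \<noteq> j" "\<forall>k<N. 0 \<le> f k" "t1 \<le> 0" "0 \<le> t2"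
  defines "g \<equiv> \<lambda>t k. f k + t * mass_transfer i j k"
  shows "t2 * nontrivial_ap_sum N (g t1) - t1 * nontrivial_ap_sum N (g t2) \<le> (t2 - t1) * nontrivial_ap_sum N f"
proof -
  let ?T = "\<lambda>h n d. h n * h ((n + d) mod N) * h ((n + 2 * d) mod N)"
  have "t2 * ?T (g t1) n d - t1 * ?T (g t2) n d \<le> (t2 - t1) * ?T f n d" if "n < N" "0 < d" "d < N" for n d
    using assms(3-5) that mass_transfer_products[OF assms(2) progression_points_distinct[OF assms(1) that]]
    unfolding g_def by (intro triple_product_chord) auto
  then have "(\<Sum>n<N. \<Sum>d\<in>{1..<N}. t2 * ?T (g t1) n d - t1 * ?T (g t2) n d)
      \<le> (\<Sum>n<N. \<Sum>d\<in>{1..<N}. (t2 - t1) * ?T f n d)"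
    by (intro sum_mono) auto
  then show ?thesis
    by (simp add: nontrivial_ap_sum_def sum_distrib_left sum_subtractf)
qed

lemma nontrivial_ap_sum_endpoint_le:
  assumes "odd N" "i \<noteq> j" "\<forall>k<N. 0 \<le> f k" "t1 < 0" "0 < t2"
  defines "g \<equiv> \<lambda>t k. f k + t * mass_transfer i j k"
  shows "nontrivial_ap_sum N (g t1) \<le> nontrivial_ap_sum N f \<or> nontrivial_ap_sum N (g t2) \<le> nontrivial_ap_sum N f"
proof (rule ccontr)
  let ?F = "nontrivial_ap_sum N f" and ?F1 = "nontrivial_ap_sum N (g t1)" and ?F2 = "nontrivial_ap_sum N (g t2)"
  assume "\<not> ?thesis"
  then have "t2 * ?F < t2 * ?F1" "(- t1) * ?F < (- t1) * ?F2"
    using assms(4,5) by (auto intro: mult_strict_left_mono)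
  moreover have "(t2 - t1) * ?F = t2 * ?F + (- t1) * ?F"
    by (simp add: algebra_simps)
  moreover have "t2 * ?F1 - t1 * ?F2 \<le> (t2 - t1) * ?F"
    using nontrivial_ap_sum_chord[OF assms(1-3)] assms(4,5) unfolding g_def by simp
  ultimately show False
    by linarith
qed

definition in_unit_cube :: "nat \<Rightarrow> (nat \<Rightarrow> real) \<Rightarrow> bool" where
  "in_unit_cube N f \<longleftrightarrow> (\<forall>k<N. 0 \<le> f k \<and> f k \<le> 1)"

definition fractional_points :: "nat \<Rightarrow> (nat \<Rightarrow> real) \<Rightarrow> nat set" where
  "fractional_points N f = {k. k < N \<and> 0 < f k \<and> f k < 1}"

lemma finite_fractional_points [simp]: "finite (fractional_points N f)"
  unfolding fractional_points_def by simp

lemma pipage_step: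
  assumes "odd N" "in_unit_cube N f" "i \<in> fractional_points N f" "j \<in> fractional_points N f" "i \<noteq> j"
  obtains g where "in_unit_cube N g" "(\<Sum>k<N. g k) = (\<Sum>k<N. f k)"
    "nontrivial_ap_sum N g \<le> nontrivial_ap_sum N f" "fractional_points N g \<subset> fractional_points N f"
proof -
  define \<delta> where "\<delta> = mass_transfer i j"
  have fi: "i < N" "0 < f i" "f i < 1" and fj: "j < N" "0 < f j" "f j < 1"
    using assms(3,4) unfolding fractional_points_def by auto
  \<comment> \<open>The two points where the line through f in direction e_i - e_j leaves the cube.\<close>
  define t1 where "t1 = - min (f i) (1 - f j)"
  define t2 where "t2 = min (1 - f i) (f j)"
  have "t1 < 0" "0 < t2"
    using fi fj unfolding t1_def t2_def by auto
  have endpoint: "in_unit_cube N (\<lambda>k. f k + t * \<delta> k) \<and> (\<Sum>k<N. f k + t * \<delta> k) = (\<Sum>k<N. f k)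
     \<and> fractional_points N (\<lambda>k. f k + t * \<delta> k) \<subset> fractional_points N f"
    if "t = t1 \<or> t = t2" for t
  proof (intro conjI)
    have "- min (f i) (1 - f j) \<le> t" "t \<le> min (1 - f i) (f j)"
      using that \<open>t1 < 0\<close> \<open>0 < t2\<close> unfolding t1_def t2_def by auto
    then show "in_unit_cube N (\<lambda>k. f k + t * \<delta> k)"
      using assms(2,5) unfolding in_unit_cube_def \<delta>_def mass_transfer_def by auto
    show "(\<Sum>k<N. f k + t * \<delta> k) = (\<Sum>k<N. f k)"
      using sum_mass_transfer[OF fi(1) fj(1)]
      by (simp add: \<delta>_def sum.distrib sum_distrib_left[symmetric])
    have "fractional_points N (\<lambda>k. f k + t * \<delta> k) \<subseteq> fractional_points N f \<union> {i, j}"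
      unfolding fractional_points_def \<delta>_def mass_transfer_def by auto
    moreover have "i \<notin> fractional_points N (\<lambda>k. f k + t * \<delta> k) \<or> j \<notin> fractional_points N (\<lambda>k. f k + t * \<delta> k)"
      using that assms(5) unfolding fractional_points_def \<delta>_def mass_transfer_def t1_def t2_def
      by (auto simp: min_def split: if_splits)
    ultimately show "fractional_points N (\<lambda>k. f k + t * \<delta> k) \<subset> fractional_points N f"
      using assms(3,4) by blast
  qed
  have "\<forall>k<N. 0 \<le> f k"
    using assms(2) unfolding in_unit_cube_def by simp
  then have "nontrivial_ap_sum N (\<lambda>k. f k + t1 * \<delta> k) \<le> nontrivial_ap_sum N f
    \<or> nontrivial_ap_sum N (\<lambda>k. f k + t2 * \<delta> k) \<le> nontrivial_ap_sum N f"
    using nontrivial_ap_sum_endpoint_le[OF assms(1,5) _ \<open>t1 < 0\<close> \<open>0 < t2\<close>] unfolding \<delta>_def by blast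
  then show ?thesis
    using endpoint that by blast
qed

lemma pipage_rounding:
  assumes "odd N" "in_unit_cube N f"
  obtains g where "in_unit_cube N g" "(\<Sum>k<N. g k) = (\<Sum>k<N. f k)"
    "nontrivial_ap_sum N g \<le> nontrivial_ap_sum N f" "card (fractional_points N g) \<le> 1"
  using assms(2)
proof (induction "card (fractional_points N f)" arbitrary: f rule: less_induct)
  case less
  show ?case
  proof (cases "card (fractional_points N f) \<le> 1")
    case True
    then show ?thesis
      using less.prems by blast
  next
    case False
    then obtain i j where "i \<in> fractional_points N f" "j \<in> fractional_points N f" "i \<noteq> j"
      using card_le_Suc0_iff_eq[of "fractional_points N f"] by auto
    with assms(1) \<open>in_unit_cube N f\<close> obtain g where g: "in_unit_cube N g" "(\<Sum>k<N. g k) = (\<Sum>k<N. f k)"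
      "nontrivial_ap_sum N g \<le> nontrivial_ap_sum N f" "fractional_points N g \<subset> fractional_points N f"
      by (rule pipage_step)
    then have "card (fractional_points N g) < card (fractional_points N f)"
      by (simp add: psubset_card_mono)
    then show ?thesis
      using less.hyps[OF _ _ g(1)] less.prems(1) g(2,3) by (metis order_trans)
  qed
qed

lemma Lambda3_eq_cubes_plus_nontrivial:
  assumes "0 < N"
  shows "Lambda3 N f = (1 / (real N)\<^sup>2) * ((\<Sum>n<N. f n ^ 3) + nontrivial_ap_sum N f)"
proof -
  have "{..<N} = insert 0 {1..<N}"
    using assms by auto
  then have "(\<Sum>d<N. f n * f ((n + d) mod N) * f ((n + 2 * d) mod N))
      = f n ^ 3 + (\<Sum>d\<in>{1..<N}. f n * f ((n + d) mod N) * f ((n + 2 * d) mod N))" if "n < N" for n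
    using that by (simp add: power3_eq_cube)
  then show ?thesis
    unfolding Lambda3_def nontrivial_ap_sum_def by (simp add: sum.distrib)
qed

lemma Lambda3_le_if_nontrivial_ap_sum_le:
  assumes "0 < N" "in_unit_cube N f" "in_unit_cube N g"
    and "nontrivial_ap_sum N g \<le> nontrivial_ap_sum N f"
  shows "Lambda3 N g \<le> Lambda3 N f + 1 / real N"
proof -
  have "0 \<le> (\<Sum>n<N. f n ^ 3)"
    using assms(2) unfolding in_unit_cube_def by (intro sum_nonneg) auto
  moreover have "(\<Sum>n<N. g n ^ 3) \<le> (\<Sum>n<N. 1)"
    using assms(3) unfolding in_unit_cube_def by (intro sum_mono) (auto intro: power_le_one)
  ultimately have "(\<Sum>n<N. g n ^ 3) + nontrivial_ap_sum N g \<le> (\<Sum>n<N. f n ^ 3) + nontrivial_ap_sum N f + real N"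
    using assms(4) by simp
  then have "Lambda3 N g \<le> (1 / (real N)\<^sup>2) * ((\<Sum>n<N. f n ^ 3) + nontrivial_ap_sum N f + real N)"
    unfolding Lambda3_eq_cubes_plus_nontrivial[OF assms(1)] by (intro mult_left_mono) auto
  also have "\<dots> = Lambda3 N f + 1 / real N"
    using assms(1) by (simp add: Lambda3_eq_cubes_plus_nontrivial distrib_left power2_eq_square)
  finally show ?thesis .
qed

lemma Lambda3_le_if_eq_off_point:
  assumes "0 < N" "in_unit_cube N f" "in_unit_cube N g" "\<forall>k<N. k \<noteq> k0 \<longrightarrow> g k = f k"
  shows "Lambda3 N g \<le> Lambda3 N f + 3 / real N"
proof -
  define I where "I k = (if k = k0 then 1 else 0 :: real)" for k
  have I_sum: "(\<Sum>n<N. I n) \<le> 1"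
    unfolding I_def by simp
  have triple_le: "g a * g b * g c - f a * f b * f c \<le> I a + I b + I c" if "a < N" "b < N" "c < N" for a b c
  proof (cases "a = k0 \<or> b = k0 \<or> c = k0")
    case True
    have "g a * g b * g c \<le> 1" "0 \<le> f a * f b * f c"
      using assms(2,3) that unfolding in_unit_cube_def by (auto intro: mult_le_one)
    moreover have "1 \<le> I a + I b + I c"
      using True unfolding I_def by auto
    ultimately show ?thesis
      by linarith
  next
    case False
    then show ?thesis
      using assms(4) that unfolding I_def by auto
  qed
  let ?S = "\<lambda>h. \<Sum>n<N. \<Sum>d<N. h n * h ((n + d) mod N) * h ((n + 2 * d) mod N)"
  have "?S g - ?S f \<le> (\<Sum>n<N. \<Sum>d<N. I n + I ((n + d) mod N) + I ((n + 2 * d) mod N))"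
    unfolding sum_subtractf[symmetric] using assms(1) by (intro sum_mono triple_le) auto
  also have "\<dots> = (\<Sum>n<N. \<Sum>d<N. I n) + (\<Sum>d<N. \<Sum>n<N. I ((n + d) mod N))
      + (\<Sum>d<N. \<Sum>n<N. I ((n + 2 * d) mod N))"
    by (simp add: sum.distrib sum.swap[of "\<lambda>n d. I ((n + d) mod N)"]
        sum.swap[of "\<lambda>n d. I ((n + 2 * d) mod N)"])
  also have "\<dots> = 3 * (real N * (\<Sum>n<N. I n))"
    by (simp add: sum_shift_mod flip: sum_distrib_left)
  also have "\<dots> \<le> 3 * real N"
    using I_sum by (simp add: mult_left_le)
  finally have "(1 / (real N)\<^sup>2) * ?S g \<le> (1 / (real N)\<^sup>2) * (?S f + 3 * real N)"
    by (intro mult_left_mono) auto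
  then show ?thesis
    using assms(1) unfolding Lambda3_def by (simp add: distrib_left power2_eq_square)
qed

lemma sum_indicator_lessThan:
  fixes N :: nat
  assumes "S \<subseteq> {..<N}"
  shows "(\<Sum>k<N. indicator S k :: real) = real (card S)"
  unfolding indicator_def using assms by (simp add: Int_absorb1)

lemma in_unit_cube_indicator: "in_unit_cube N (indicator S)"
  by (simp add: in_unit_cube_def indicator_def)

lemma round_to_set:
  assumes "odd N" "in_unit_cube N f"
  obtains S where "S \<subseteq> {..<N}" "(\<Sum>k<N. f k) \<le> real (card S)"
    "Lambda3 N (indicator S) \<le> Lambda3 N f + 4 / real N"
proof -
  have "0 < N"
    using assms(1) by (rule odd_pos)
  obtain g where g: "in_unit_cube N g" "(\<Sum>k<N. g k) = (\<Sum>k<N. f k)"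
    "nontrivial_ap_sum N g \<le> nontrivial_ap_sum N f" "card (fractional_points N g) \<le> 1"
    using pipage_rounding[OF assms] .
  then obtain k0 where "fractional_points N g \<subseteq> {k0}"
    by (metis One_nat_def card_le_Suc0_iff_eq finite_fractional_points subsetI singletonI all_not_in_conv)
  then have g01: "g k = 0 \<or> g k = 1" if "k < N" "k \<noteq> k0" for k
    using g(1) that unfolding in_unit_cube_def fractional_points_def by force
  \<comment> \<open>Round the remaining fractional value up, so that the size constraint survives.\<close>
  define S where "S = {k. k < N \<and> 0 < g k}"
  have "S \<subseteq> {..<N}"
    unfolding S_def by auto
  have "(\<Sum>k<N. g k) \<le> (\<Sum>k<N. indicator S k)"
    using g(1) unfolding S_def in_unit_cube_def by (intro sum_mono) (auto simp: indicator_def)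
  then have "(\<Sum>k<N. f k) \<le> real (card S)"
    using g(2) sum_indicator_lessThan[OF \<open>S \<subseteq> {..<N}\<close>] by simp
  moreover have "\<forall>k<N. k \<noteq> k0 \<longrightarrow> indicator S k = g k"
    unfolding S_def by (auto simp: indicator_def dest: g01)
  then have "Lambda3 N (indicator S) \<le> Lambda3 N g + 3 / real N"
    using Lambda3_le_if_eq_off_point[OF \<open>0 < N\<close> g(1) in_unit_cube_indicator] by blast
  moreover have "Lambda3 N g \<le> Lambda3 N f + 1 / real N"
    using Lambda3_le_if_nontrivial_ap_sum_le[OF \<open>0 < N\<close> assms(2) g(1,3)] .
  ultimately show ?thesis
    using that \<open>S \<subseteq> {..<N}\<close> by (simp add: add_divide_distrib[symmetric])
qed

lemma Lambda3_nonneg: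
  assumes "\<forall>n<N. 0 \<le> f n"
  shows "0 \<le> Lambda3 N f"
  unfolding Lambda3_def using assms by (intro mult_nonneg_nonneg sum_nonneg) auto

lemma EE_indicator:
  fixes N :: nat
  assumes "S \<subseteq> {..<N}"
  shows "EE N (indicator S) = real (card S) / real N"
  unfolding EE_def sum_indicator_lessThan[OF assms] by simp

lemma rho_le_Lambda3:
  assumes "\<forall>n<N. 0 \<le> f n \<and> f n \<le> 1" "v \<le> EE N f"
  shows "rho v N \<le> Lambda3 N f"
  unfolding rho_def
  by (rule cInf_lower) (use assms in \<open>auto intro!: bdd_belowI[of _ 0] Lambda3_nonneg\<close>)

lemma le_rho:
  assumes "0 < N" "v \<le> 1"
    and "\<And>f. \<forall>n<N. 0 \<le> f n \<and> f n \<le> 1 \<Longrightarrow> v \<le> EE N f \<Longrightarrow> z \<le> Lambda3 N f"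
  shows "z \<le> rho v N"
proof -
  have "EE N (\<lambda>_. 1) = 1"
    using assms(1) by (simp add: EE_def)
  then have "Lambda3 N (\<lambda>_. 1) \<in> {Lambda3 N f | f. (\<forall>n<N. 0 \<le> f n \<and> f n \<le> 1) \<and> EE N f \<ge> v}"
    using assms(2) by auto
  then show ?thesis
    unfolding rho_def by (intro cInf_greatest) (auto intro: assms(3))
qed

lemma finite_rho2_candidates:
  "finite {Lambda3 N (indicator S) | S. S \<subseteq> {..<N} \<and> real (card S) \<ge> v * real N}"
  by (rule finite_subset[of _ "(\<lambda>S. Lambda3 N (indicator S)) ` Pow {..<N}"]) auto

lemma rho2_le_Lambda3:
  assumes "S \<subseteq> {..<N}" "v * real N \<le> real (card S)"
  shows "rho2 v N \<le> Lambda3 N (indicator S)"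
  unfolding rho2_def using assms by (intro Min_le finite_rho2_candidates) auto

lemma rho2_attained:
  assumes "v \<le> 1"
  obtains S where "S \<subseteq> {..<N}" "v * real N \<le> real (card S)" "rho2 v N = Lambda3 N (indicator S)"
proof -
  have "v * real N \<le> real (card {..<N})"
    using mult_right_mono[OF assms, of "real N"] by simp
  then have "Lambda3 N (indicator {..<N}) \<in> {Lambda3 N (indicator S) | S. S \<subseteq> {..<N} \<and> real (card S) \<ge> v * real N}"
    by blast
  then have "rho2 v N \<in> {Lambda3 N (indicator S) | S. S \<subseteq> {..<N} \<and> real (card S) \<ge> v * real N}"
    unfolding rho2_def by (intro Min_in finite_rho2_candidates) auto
  then show ?thesis
    using that by blast
qed

lemma rho_le_rho2:
  assumes "0 < N" "v \<le> 1"
  shows "rho v N \<le> rho2 v N"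
proof -
  obtain S where S: "S \<subseteq> {..<N}" "v * real N \<le> real (card S)" "rho2 v N = Lambda3 N (indicator S)"
    using rho2_attained[OF assms(2)] .
  have "v \<le> EE N (indicator S)"
    using S(1,2) assms(1) by (simp add: EE_indicator field_simps)
  then show ?thesis
    unfolding S(3) using in_unit_cube_indicator unfolding in_unit_cube_def by (intro rho_le_Lambda3) auto
qed

lemma rho2_le_rho:
  assumes "odd N" "v \<le> 1"
  shows "rho2 v N \<le> rho v N + 4 / real N"
proof -
  have "0 < N"
    using assms(1) by (rule odd_pos)
  have "rho2 v N - 4 / real N \<le> rho v N"
  proof (rule le_rho[OF \<open>0 < N\<close> assms(2)])
    fix f
    assume f: "\<forall>n<N. 0 \<le> f n \<and> f n \<le> 1" "v \<le> EE N f"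
    then obtain S where S: "S \<subseteq> {..<N}" "(\<Sum>k<N. f k) \<le> real (card S)"
      "Lambda3 N (indicator S) \<le> Lambda3 N f + 4 / real N"
      using round_to_set[OF assms(1)] unfolding in_unit_cube_def by blast
    have "v * real N \<le> (\<Sum>k<N. f k)"
      using f(2) \<open>0 < N\<close> unfolding EE_def by (simp add: field_simps)
    then have "rho2 v N \<le> Lambda3 N (indicator S)"
      using S(1,2) by (intro rho2_le_Lambda3) auto
    then show "rho2 v N - 4 / real N \<le> Lambda3 N f"
      using S(3) by simp
  qed
  then show ?thesis
    by simp
qed

theorem mainTheorem2:
  fixes v L :: real
  assumes "0 < v" and "v \<le> 1"
    and "((\<lambda>p. rho v p) \<longlongrightarrow> L) (inf sequentially (principal {p. prime p}))"
  shows "((\<lambda>p. rho2 v p) \<longlongrightarrow> L) (inf sequentially (principal {p. prime p}))"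
proof -
  let ?F = "inf sequentially (principal {p::nat. prime p})"
  have "eventually (\<lambda>p. odd p) ?F"
    unfolding eventually_inf_principal
    by (rule eventually_mono[OF eventually_gt_at_top[of 2]]) (use prime_odd_nat in blast)
  then have bounds: "eventually (\<lambda>p. rho v p \<le> rho2 v p \<and> rho2 v p \<le> rho v p + 4 / real p) ?F"
    by (rule eventually_mono) (use assms(2) rho_le_rho2 rho2_le_rho odd_pos in blast)
  have "((\<lambda>p::nat. 4 / real p) \<longlongrightarrow> 0) ?F"
    by (rule tendsto_mono[OF inf_le1 lim_const_over_n])
  from tendsto_add[OF assms(3) this] have "((\<lambda>p. rho v p + 4 / real p) \<longlongrightarrow> L) ?F"
    by simp
  with assms(3) show ?thesis
    by (rule tendsto_sandwich[rotated 2]) (use bounds in \<open>auto elim: eventually_mono\<close>)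
qed

end
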